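(* Write $\dfrac{(q;q)_\infty^4}{(q^2;q^2)_\infty^2(q^4;q^4)_\infty}=\sum_{n\ge0}a_nq^n$. Then for all $n\ge0$: $a_n>0$ if $n\equiv0,2\pmod4$, $a_n<0$ if $n\equiv1\pmod4$, and $a_n=0$ if $n\equiv3\pmod4$.
   Context: For $|q|<1$, $(a;q)_\infty=\prod_{k\ge0}(1-aq^k)$. *)

theory Defs
  imports "HOL-Analysis.Analysis"
begin

definition qpoch_inf :: "real \<Rightarrow> real \<Rightarrow> real" where
  "qpoch_inf a q = (\<Prod>k. 1 - a * q ^ k)"

definition F :: "real \<Rightarrow> real" where
  "F q = qpoch_inf q q ^ 4 / (qpoch_inf (q\<^sup>2) (q\<^sup>2) ^ 2 * qpoch_inf (q ^ 4) (q ^ 4))"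

end

theory Submission
  imports Defs
begin

text \<open>
  Since (q;q)_oo = (q;q^2)_oo (q^2;q^2)_oo, the quotient equals theta(q)^2 / (q^4;q^4)_oo, where
  theta(q) = (q;q^2)_oo^2 (q^2;q^2)_oo = sum over all integers j of (-1)^j q^(j^2) by Gauss's
  identity; the latter is the limit of a finite form of the q-binomial theorem. The coefficient
  c_n of q^n in theta(q)^2 is (-1)^n times the number of representations of n as a sum of two
  squares, so it vanishes for n = 3 mod 4, while 1 / (q^4;q^4)_oo = sum of p(k) q^(4k) has
  positive coefficients. Hence a_n = sum of c_(n-4k) p(k) over k is a sum of terms of sign
  (-1)^n, all zero when n = 3 mod 4; otherwise the term k = n div 4 is nonzero because
  c_0 = 1, c_1 = -4 and c_2 = 4.
\<close>

section \<open>q-Pochhammer symbols\<close>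

definition qpoch :: "'a::comm_ring_1 \<Rightarrow> 'a \<Rightarrow> nat \<Rightarrow> 'a" where
  "qpoch a q n = (\<Prod>k<n. 1 - a * q ^ k)"

lemma qpoch_0 [simp]: "qpoch a q 0 = 1"
  by (simp add: qpoch_def)

lemma qpoch_Suc: "qpoch a q (Suc n) = qpoch a q n * (1 - a * q ^ n)"
  by (simp add: qpoch_def)

lemma qpoch_double: "qpoch q q (2 * n) = qpoch q (q\<^sup>2) n * qpoch (q\<^sup>2) (q\<^sup>2) n"
proof (induction n)
  case (Suc n)
  have "q * q ^ (2 * n) = q * (q\<^sup>2) ^ n" "q * q ^ Suc (2 * n) = q\<^sup>2 * (q\<^sup>2) ^ n"
    by (simp_all add: power_mult power2_eq_square)
  with Suc show ?case
    by (simp add: qpoch_Suc mult_ac)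
qed simp

lemma convergent_prod_qpoch:
  fixes a q :: real
  assumes "\<bar>q\<bar> < 1"
  shows "convergent_prod (\<lambda>k. 1 - a * q ^ k)"
proof -
  have "summable (\<lambda>k. \<bar>a\<bar> * \<bar>q\<bar> ^ k)"
    using assms by (intro summable_mult summable_geometric) simp
  then have "summable (\<lambda>k. norm ((1 - a * q ^ k) - 1))"
    by (simp add: abs_mult power_abs)
  then show ?thesis
    by (intro abs_convergent_prod_imp_convergent_prod summable_imp_abs_convergent_prod)
qed

lemma qpoch_tendsto_qpoch_inf:
  assumes "\<bar>q\<bar> < 1"
  shows "(\<lambda>n. qpoch a q n) \<longlonglongrightarrow> qpoch_inf a q"
proof -
  have "(\<lambda>n. \<Prod>k\<le>n. 1 - a * q ^ k) \<longlonglongrightarrow> qpoch_inf a q"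
    unfolding qpoch_inf_def by (rule convergent_prod_LIMSEQ[OF convergent_prod_qpoch[OF assms]])
  then have "(\<lambda>n. qpoch a q (Suc n)) \<longlonglongrightarrow> qpoch_inf a q"
    by (simp add: qpoch_def lessThan_Suc_atMost)
  then show ?thesis
    by (rule LIMSEQ_imp_Suc)
qed

lemma qpoch_inf_double:
  assumes "\<bar>q\<bar> < 1"
  shows "qpoch_inf q q = qpoch_inf q (q\<^sup>2) * qpoch_inf (q\<^sup>2) (q\<^sup>2)"
proof (rule LIMSEQ_unique)
  have "strict_mono (\<lambda>n::nat. 2 * n)"
    by (simp add: strict_mono_def)
  then show "(\<lambda>n. qpoch q q (2 * n)) \<longlonglongrightarrow> qpoch_inf q q"
    using LIMSEQ_subseq_LIMSEQ[OF qpoch_tendsto_qpoch_inf[OF assms]] by (simp add: o_def)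
  have "\<bar>q\<^sup>2\<bar> < 1"
    using assms by (simp add: abs_square_less_1)
  then show "(\<lambda>n. qpoch q q (2 * n)) \<longlonglongrightarrow> qpoch_inf q (q\<^sup>2) * qpoch_inf (q\<^sup>2) (q\<^sup>2)"
    unfolding qpoch_double by (intro tendsto_mult qpoch_tendsto_qpoch_inf)
qed

lemma qpoch_factor_pos:
  fixes a q :: real
  assumes "\<bar>a\<bar> < 1" "\<bar>q\<bar> < 1"
  shows "0 < 1 - a * q ^ k"
proof -
  have "\<bar>a * q ^ k\<bar> \<le> \<bar>a\<bar>"
    using assms by (simp add: abs_mult power_abs mult_left_le power_le_one)
  with assms show ?thesis
    by linarith
qed

lemma qpoch_pos:
  fixes a q :: real
  assumes "\<bar>a\<bar> < 1" "\<bar>q\<bar> < 1"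
  shows "0 < qpoch a q n"
  unfolding qpoch_def using qpoch_factor_pos[OF assms] by (intro prod_pos) auto

lemma qpoch_inf_pos:
  assumes "\<bar>a\<bar> < 1" "\<bar>q\<bar> < 1"
  shows "0 < qpoch_inf a q"
  unfolding qpoch_inf_def
  using qpoch_factor_pos[OF assms] by (intro less_0_prodinf convergent_prod_qpoch assms) auto

lemma qpoch_inf_zero [simp]: "qpoch_inf 0 q = 1"
  by (simp add: qpoch_inf_def)

lemma qpoch_bounds:
  fixes a q :: real
  assumes "0 \<le> a" "a < 1" "0 \<le> q" "q < 1"
  shows "qpoch_inf a q \<le> qpoch a q n" "qpoch a q n \<le> 1"
proof -
  have factor: "0 \<le> 1 - a * q ^ k" "1 - a * q ^ k \<le> 1" for k
    using qpoch_factor_pos[of a q k] assms by auto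
  show "qpoch_inf a q \<le> qpoch a q n"
    unfolding qpoch_def qpoch_inf_def
    by (rule prod_ge_prodinf[OF convergent_prod_has_prod[OF convergent_prod_qpoch]])
      (use factor assms in auto)
  show "qpoch a q n \<le> 1"
    unfolding qpoch_def using factor by (intro prod_le_1) auto
qed

section \<open>Gaussian binomial coefficients\<close>

fun qbinom :: "'a::comm_ring_1 \<Rightarrow> nat \<Rightarrow> nat \<Rightarrow> 'a" where
  "qbinom t 0 k = (if k = 0 then 1 else 0)"
| "qbinom t (Suc m) 0 = 1"
| "qbinom t (Suc m) (Suc k) = qbinom t m k + t ^ Suc k * qbinom t m (Suc k)"

lemma qbinom_eq_0: "m < k \<Longrightarrow> qbinom t m k = 0"
proof (induction m arbitrary: k)
  case (Suc m)
  then show ?case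
    by (cases k) auto
qed simp

lemma qbinom_0_right [simp]: "qbinom t m 0 = 1"
  by (cases m) auto

lemma qbinom_same [simp]: "qbinom t m m = 1"
  by (induction m) (auto simp: qbinom_eq_0)

lemma qbinom_mult_qpoch:
  "k \<le> m \<Longrightarrow> qbinom t m k * qpoch t t k * qpoch t t (m - k) = qpoch t t m"
proof (induction m arbitrary: k)
  case (Suc m)
  show ?case
  proof (cases k)
    case (Suc j)
    show ?thesis
    proof (cases "j = m")
      case False
      with Suc.prems \<open>k = Suc j\<close> have "Suc j \<le> m"
        by simp
      then obtain d where d: "m = Suc j + d"
        using le_Suc_ex by blast
      have "qbinom t (Suc m) k * qpoch t t k * qpoch t t (Suc m - k)
          = qbinom t m j * qpoch t t j * qpoch t t (m - j) * (1 - t * t ^ j)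
            + t ^ Suc j * (qbinom t m (Suc j) * qpoch t t (Suc j) * qpoch t t (m - Suc j))
              * (1 - t * t ^ d)"
        using \<open>k = Suc j\<close> d by (simp add: qpoch_Suc algebra_simps)
      also have "\<dots> = qpoch t t m * (1 - t * t ^ m)"
        using Suc.IH[of j] Suc.IH[of "Suc j"] \<open>Suc j \<le> m\<close> d
        by (simp add: algebra_simps power_add)
      finally show ?thesis
        by (simp add: qpoch_Suc)
    qed (use \<open>k = Suc j\<close> in \<open>simp add: qbinom_eq_0 qpoch_Suc\<close>)
  qed simp
qed simp

theorem qbinomial_theorem:
  fixes x y t :: "'a::comm_ring_1"
  shows "(\<Prod>i<m. y + x * t ^ i) = (\<Sum>k\<le>m. qbinom t m k * t ^ (k choose 2) * x ^ k * y ^ (m - k))"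
proof (induction m arbitrary: x)
  case (Suc m)
  define c where "c k = qbinom t m k * t ^ (k choose 2) * t ^ k" for k
  have c_Suc: "qbinom t (Suc m) (Suc k) * t ^ (Suc k choose 2) = c k + c (Suc k)" for k
  proof -
    have "Suc k choose 2 = k + (k choose 2)"
      by (simp add: numeral_2_eq_2)
    then show ?thesis
      by (simp add: c_def algebra_simps power_add)
  qed
  have low: "(\<Sum>k\<le>m. c k * x ^ k * y ^ (Suc m - k))
      = y ^ Suc m + (\<Sum>k\<le>m. c (Suc k) * x ^ Suc k * y ^ (m - k))"
  proof -
    have "(\<Sum>k\<le>m. c k * x ^ k * y ^ (Suc m - k))
        = c 0 * y ^ Suc m + (\<Sum>k<m. c (Suc k) * x ^ Suc k * y ^ (m - k))"
      by (subst sum.atMost_shift) simp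
    moreover have "c 0 = 1" "c (Suc m) = 0"
      by (simp_all add: c_def qbinom_eq_0 binomial_eq_0)
    ultimately show ?thesis
      by (simp add: lessThan_Suc_atMost[symmetric])
  qed
  have "(\<Prod>i<Suc m. y + x * t ^ i) = (y + x) * (\<Prod>i<m. y + (x * t) * t ^ i)"
    by (subst prod.lessThan_Suc_shift) (simp add: mult_ac)
  also have "\<dots> = y * (\<Sum>k\<le>m. c k * x ^ k * y ^ (m - k)) + x * (\<Sum>k\<le>m. c k * x ^ k * y ^ (m - k))"
    unfolding Suc.IH by (simp add: c_def power_mult_distrib distrib_right mult_ac)
  also have "\<dots> = (\<Sum>k\<le>m. c k * x ^ k * y ^ (Suc m - k)) + (\<Sum>k\<le>m. c k * x ^ Suc k * y ^ (m - k))"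
    unfolding sum_distrib_left
    by (intro arg_cong2[where f = "(+)"] sum.cong) (auto simp: Suc_diff_le mult_ac)
  also have "\<dots> = y ^ Suc m + (\<Sum>k\<le>m. (c k + c (Suc k)) * x ^ Suc k * y ^ (m - k))"
    using low by (simp add: distrib_right sum.distrib)
  also have "\<dots> = (\<Sum>k\<le>Suc m. qbinom t (Suc m) k * t ^ (k choose 2) * x ^ k * y ^ (Suc m - k))"
    by (subst sum.atMost_Suc_shift) (simp add: c_Suc binomial_eq_0 del: qbinom.simps)
  finally show ?case .
qed (simp add: binomial_eq_0)

lemma qbinom_eq_divide:
  fixes t :: real
  assumes "\<bar>t\<bar> < 1" "k \<le> m"
  shows "qbinom t m k = qpoch t t m / (qpoch t t k * qpoch t t (m - k))"
proof -
  have "0 < qpoch t t k * qpoch t t (m - k)"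
    using qpoch_pos[OF assms(1) assms(1)] by simp
  then show ?thesis
    using qbinom_mult_qpoch[OF assms(2), of t] by (auto simp: eq_divide_eq mult.assoc)
qed

lemma qbinom_symmetric:
  fixes t :: real
  assumes "\<bar>t\<bar> < 1" "k \<le> m"
  shows "qbinom t m (m - k) = qbinom t m k"
  using assms by (simp add: qbinom_eq_divide mult.commute)

lemma qbinom_nonneg:
  fixes t :: "'a::linordered_idom"
  shows "0 \<le> t \<Longrightarrow> 0 \<le> qbinom t m k"
  by (induction t m k rule: qbinom.induct) simp_all

lemma qbinom_le:
  fixes t :: real
  assumes "0 \<le> t" "t < 1" "k \<le> m"
  shows "qbinom t m k \<le> 1 / (qpoch_inf t t)\<^sup>2"
proof -
  have "\<bar>t\<bar> < 1"
    using assms by simp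
  note bounds = qpoch_bounds[OF assms(1,2) assms(1,2)] and pos = qpoch_inf_pos[OF this this]
    and pos' = qpoch_pos[OF this this]
  have "qbinom t m k = qpoch t t m / (qpoch t t k * qpoch t t (m - k))"
    using qbinom_eq_divide[OF \<open>\<bar>t\<bar> < 1\<close> assms(3)] .
  also have "\<dots> \<le> 1 / (qpoch t t k * qpoch t t (m - k))"
    using bounds pos' by (intro divide_right_mono) (simp_all add: less_imp_le)
  also have "\<dots> \<le> 1 / (qpoch_inf t t)\<^sup>2"
    unfolding power2_eq_square using bounds pos pos'
    by (intro divide_left_mono mult_mono mult_pos_pos) (auto intro: less_imp_le)
  finally show ?thesis .
qed

lemma qbinom_central_tendsto:
  fixes t :: real
  assumes "\<bar>t\<bar> < 1"
  shows "(\<lambda>n. qbinom t (2 * n) (n + j)) \<longlonglongrightarrow> 1 / qpoch_inf t t"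
proof -
  define P where "P = qpoch_inf t t"
  have "P > 0"
    using qpoch_inf_pos[OF assms assms] by (simp add: P_def)
  have lim: "(\<lambda>n. qpoch t t n) \<longlonglongrightarrow> P"
    unfolding P_def by (rule qpoch_tendsto_qpoch_inf[OF assms])
  have "strict_mono (\<lambda>n::nat. 2 * n)"
    by (simp add: strict_mono_def)
  then have "(\<lambda>n. qpoch t t (2 * n) / (qpoch t t (n + j) * qpoch t t (n - j))) \<longlonglongrightarrow> P / (P * P)"
    using \<open>P > 0\<close> LIMSEQ_subseq_LIMSEQ[OF lim]
    by (intro tendsto_intros LIMSEQ_ignore_initial_segment[OF lim]
        filterlim_compose[OF lim filterlim_minus_const_nat_at_top]) (auto simp: o_def)
  moreover have "\<forall>\<^sub>F n in sequentially.
      qpoch t t (2 * n) / (qpoch t t (n + j) * qpoch t t (n - j)) = qbinom t (2 * n) (n + j)"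
    using eventually_ge_at_top[of j] by eventually_elim (simp add: qbinom_eq_divide[OF assms])
  ultimately show ?thesis
    using \<open>P > 0\<close> by (simp add: P_def Lim_transform_eventually)
qed

section \<open>Gauss's identity\<close>

(* The shape to which the q-binomial theorem applies, with t = q^2, x = -q and y = q^(2n). *)
lemma qpoch_odd_square_as_prod:
  fixes q :: "'a::comm_ring_1"
  shows "(\<Prod>i<2 * n. q ^ (2 * n) + (- q) * (q\<^sup>2) ^ i) = (- 1) ^ n * q ^ (3 * n * n) * (qpoch q (q\<^sup>2) n)\<^sup>2"
proof -
  define f where "f i = q ^ (2 * n) + (- q) * (q\<^sup>2) ^ i" for i
  have split: "(\<Prod>i<n + m. f i) = (\<Prod>i<n. f i) * (\<Prod>i<m. f (n + i))" for m
    by (induction m) (simp_all add: mult_ac)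
  have "(q\<^sup>2) ^ (n + i) = q ^ (2 * n) * (q\<^sup>2) ^ i" for i
    by (simp add: power_add power_mult)
  then have "f (n + i) = q ^ (2 * n) * (1 - q * (q\<^sup>2) ^ i)" for i
    by (simp add: f_def algebra_simps)
  then have upper: "(\<Prod>i<n. f (n + i)) = q ^ (2 * n * n) * qpoch q (q\<^sup>2) n"
    by (simp add: qpoch_def prod.distrib power_mult)
  have "f i = (- 1) * q ^ (2 * i + 1) * (1 - q * (q\<^sup>2) ^ (n - Suc i))" if "i < n" for i
  proof -
    have "2 * n = (2 * i + 1) + (1 + 2 * (n - Suc i))"
      using that by simp
    then have "q ^ (2 * n) = q ^ (2 * i + 1) * (q * (q\<^sup>2) ^ (n - Suc i))"
      by (metis power_add power_mult power_one_right)
    then show ?thesis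
      by (simp add: f_def power_mult[symmetric] algebra_simps)
  qed
  then have "(\<Prod>i<n. f i) = (\<Prod>i<n. (- 1) * q ^ (2 * i + 1) * (1 - q * (q\<^sup>2) ^ (n - Suc i)))"
    by (intro prod.cong) auto
  also have "\<dots> = (- 1) ^ n * q ^ (\<Sum>i<n. 2 * i + 1) * (\<Prod>i<n. 1 - q * (q\<^sup>2) ^ (n - Suc i))"
    by (simp only: prod.distrib prod_constant card_lessThan power_sum[symmetric])
  also have "(\<Sum>i<n. 2 * i + 1) = n * n"
    by (induction n) simp_all
  also have "(\<Prod>i<n. 1 - q * (q\<^sup>2) ^ (n - Suc i)) = qpoch q (q\<^sup>2) n"
    unfolding qpoch_def by (rule prod.nat_diff_reindex)
  finally have lower: "(\<Prod>i<n. f i) = (- 1) ^ n * q ^ (n * n) * qpoch q (q\<^sup>2) n" .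
  have "(\<Prod>i<2 * n. f i) = (\<Prod>i<n. f i) * (\<Prod>i<n. f (n + i))"
    using split[of n] by (simp add: mult_2)
  also have "\<dots> = (- 1) ^ n * (q ^ (n * n) * q ^ (2 * n * n)) * (qpoch q (q\<^sup>2) n)\<^sup>2"
    unfolding lower upper by (simp add: power2_eq_square mult_ac)
  also have "q ^ (n * n) * q ^ (2 * n * n) = q ^ (3 * n * n)"
    by (simp add: power_add[symmetric] mult.assoc)
  finally show ?thesis
    by (simp add: f_def)
qed

(* Coefficients of the sum over all integers j of (-1)^j q^(j^2); note (-1)^(j^2) = (-1)^j. *)
definition theta_coeff :: "nat \<Rightarrow> real" where
  "theta_coeff n = (if n = 0 then 1 else if \<exists>j. n = j\<^sup>2 then 2 * (- 1) ^ n else 0)"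

lemma theta_coeff_square: "theta_coeff (j\<^sup>2) = (if j = 0 then 1 else 2 * (- 1) ^ j)"
  by (auto simp: theta_coeff_def minus_one_power_iff)

lemma theta_coeff_nonsquare:
  assumes "\<And>j. n \<noteq> j\<^sup>2"
  shows "theta_coeff n = 0"
  using assms assms[of 0] by (auto simp: theta_coeff_def)

lemma two_choose_two_plus: "2 * (k choose 2) + k = k\<^sup>2"
proof -
  have "even (k * (k - 1))"
    by auto
  then have "2 * (k choose 2) = k * (k - 1)"
    by (simp add: choose_two)
  then show ?thesis
    by (cases k) (simp_all add: power2_eq_square)
qed

lemma gauss_exponent:
  fixes j k n :: nat
  assumes "j \<le> n" "k = n + j \<or> k = n - j"
  shows "k\<^sup>2 + 2 * n * (2 * n - k) = 3 * n * n + j\<^sup>2"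
proof -
  obtain d where "n = j + d"
    using le_Suc_ex[OF assms(1)] ..
  with assms(2) show ?thesis
    by (auto simp: power2_eq_square algebra_simps)
qed

(* The finite Gauss identity, with the terms for j and -j of the sum over |j| <= n merged. *)
lemma qpoch_odd_square_finite:
  fixes q :: real
  assumes "q \<noteq> 0" "\<bar>q\<bar> < 1"
  shows "(qpoch q (q\<^sup>2) n)\<^sup>2 = (\<Sum>j\<le>n. theta_coeff (j\<^sup>2) * qbinom (q\<^sup>2) (2 * n) (n + j) * q ^ j\<^sup>2)"
proof -
  define c where "c = (- 1) ^ n * q ^ (3 * n * n)"
  define u where "u j = (- 1) ^ j * qbinom (q\<^sup>2) (2 * n) (n + j) * q ^ j\<^sup>2" for j
  define g where "g k = qbinom (q\<^sup>2) (2 * n) k * (q\<^sup>2) ^ (k choose 2) * (- q) ^ k * (q ^ (2 * n)) ^ (2 * n - k)" for k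
  have g_eq: "g k = (- 1) ^ k * qbinom (q\<^sup>2) (2 * n) k * q ^ (k\<^sup>2 + 2 * n * (2 * n - k))" for k
  proof -
    have "g k = (- 1) ^ k * qbinom (q\<^sup>2) (2 * n) k * q ^ (2 * (k choose 2) + k + 2 * n * (2 * n - k))"
      by (simp add: g_def power_minus[of q] power_add power_mult mult_ac)
    then show ?thesis
      by (simp only: two_choose_two_plus)
  qed
  have upper: "g (n + j) = c * u j" if "j \<le> n" for j
    unfolding g_eq gauss_exponent[OF that disjI1[OF refl]] by (simp add: c_def u_def power_add mult_ac)
  have lower: "g (n - j) = c * u j" if "j \<le> n" for j
  proof -
    have "\<bar>q\<^sup>2\<bar> < 1"
      using assms(2) by (simp add: abs_square_less_1)
    then have "qbinom (q\<^sup>2) (2 * n) (n - j) = qbinom (q\<^sup>2) (2 * n) (n + j)"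
      using qbinom_symmetric[of "q\<^sup>2" "n + j" "2 * n"] that by simp
    moreover have "(- 1 :: real) ^ (n - j) = (- 1) ^ n * (- 1) ^ j"
      using that by (auto simp: power_add dest!: le_Suc_ex)
    ultimately show ?thesis
      unfolding g_eq gauss_exponent[OF that disjI2[OF refl]] by (simp add: c_def u_def power_add mult_ac)
  qed
  have split: "(\<Sum>k\<le>n + m. g k) = (\<Sum>k<n. g k) + (\<Sum>j\<le>m. g (n + j))" for m
    by (induction m) (simp_all add: lessThan_Suc_atMost[symmetric])
  have "c * (qpoch q (q\<^sup>2) n)\<^sup>2 = (\<Sum>k\<le>2 * n. g k)"
    using qpoch_odd_square_as_prod[of q n] qbinomial_theorem[of "q ^ (2 * n)" "- q" "q\<^sup>2" "2 * n"]
    by (simp add: c_def g_def)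
  also have "\<dots> = (\<Sum>j<n. g (n - Suc j)) + (\<Sum>j\<le>n. g (n + j))"
    using split[of n] by (simp add: mult_2 sum.nat_diff_reindex)
  also have "\<dots> = c * ((\<Sum>j<n. u (Suc j)) + (\<Sum>j\<le>n. u j))"
    by (simp add: upper lower sum_distrib_left distrib_left)
  also have "\<dots> = c * (\<Sum>j\<le>n. theta_coeff (j\<^sup>2) * qbinom (q\<^sup>2) (2 * n) (n + j) * q ^ j\<^sup>2)"
    by (simp add: sum.atMost_shift theta_coeff_square u_def sum.distrib[symmetric] sum_distrib_left mult_ac)
  finally show ?thesis
    using assms(1) by (simp add: c_def)
qed

lemma gauss_term_bound:
  fixes q :: real
  assumes "\<bar>q\<bar> < 1" "j \<le> n"
  shows "\<bar>theta_coeff (j\<^sup>2) * qbinom (q\<^sup>2) (2 * n) (n + j) * q ^ j\<^sup>2\<bar>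
    \<le> 2 * (1 / (qpoch_inf (q\<^sup>2) (q\<^sup>2))\<^sup>2 * \<bar>q\<bar> ^ j)"
proof -
  have t: "0 \<le> q\<^sup>2" "q\<^sup>2 < 1"
    using assms(1) by (simp_all add: abs_square_less_1)
  have "\<bar>theta_coeff (j\<^sup>2) * qbinom (q\<^sup>2) (2 * n) (n + j) * q ^ j\<^sup>2\<bar>
      = \<bar>theta_coeff (j\<^sup>2)\<bar> * (qbinom (q\<^sup>2) (2 * n) (n + j) * \<bar>q ^ j\<^sup>2\<bar>)"
    using qbinom_nonneg[OF t(1)] by (simp add: abs_mult)
  also have "\<dots> \<le> 2 * (1 / (qpoch_inf (q\<^sup>2) (q\<^sup>2))\<^sup>2 * \<bar>q\<bar> ^ j)"
  proof (intro mult_mono)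
    show "\<bar>theta_coeff (j\<^sup>2)\<bar> \<le> 2"
      by (simp add: theta_coeff_square abs_mult)
    show "\<bar>q ^ j\<^sup>2\<bar> \<le> \<bar>q\<bar> ^ j"
      unfolding power_abs using assms(1)
      by (intro power_decreasing) (auto simp: power2_eq_square le_square)
    show "qbinom (q\<^sup>2) (2 * n) (n + j) \<le> 1 / (qpoch_inf (q\<^sup>2) (q\<^sup>2))\<^sup>2"
      using assms(2) by (intro qbinom_le t) simp
  qed (simp_all add: qbinom_nonneg t(1))
  finally show ?thesis .
qed

lemma gauss_identity_squares:
  fixes q :: real
  assumes "q \<noteq> 0" "\<bar>q\<bar> < 1"
  shows "(\<lambda>j. theta_coeff (j\<^sup>2) * q ^ j\<^sup>2) sums ((qpoch_inf q (q\<^sup>2))\<^sup>2 * qpoch_inf (q\<^sup>2) (q\<^sup>2))"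
proof -
  define t where "t = q\<^sup>2"
  have t: "\<bar>t\<bar> < 1"
    using assms by (simp add: t_def abs_square_less_1)
  define P where "P = qpoch_inf t t"
  have "P > 0"
    using qpoch_inf_pos[OF t t] by (simp add: P_def)
  define a where "a j n = (if j \<le> n then theta_coeff (j\<^sup>2) * qbinom t (2 * n) (n + j) * q ^ j\<^sup>2 else 0)" for j n
  define b where "b j = theta_coeff (j\<^sup>2) * q ^ j\<^sup>2 / P" for j
  define M where "M j = 2 * (1 / P\<^sup>2 * \<bar>q\<bar> ^ j)" for j
  have lim: "(\<lambda>n. a j n) \<longlonglongrightarrow> b j" for j
  proof -
    have "(\<lambda>n. theta_coeff (j\<^sup>2) * qbinom t (2 * n) (n + j) * q ^ j\<^sup>2) \<longlonglongrightarrow> b j"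
      using qbinom_central_tendsto[OF t, of j]
      by (auto intro!: tendsto_eq_intros simp: b_def P_def)
    moreover have "\<forall>\<^sub>F n in sequentially. theta_coeff (j\<^sup>2) * qbinom t (2 * n) (n + j) * q ^ j\<^sup>2 = a j n"
      using eventually_ge_at_top[of j] by eventually_elim (simp add: a_def)
    ultimately show ?thesis
      by (rule Lim_transform_eventually)
  qed
  have bound: "norm (a j n) \<le> M j" for j n
    using gauss_term_bound[OF assms(2), of j n]
    by (cases "j \<le> n") (simp_all add: a_def M_def P_def t_def)
  have "summable M"
    unfolding M_def using assms by (intro summable_mult summable_geometric) simp
  then have tannery: "(\<lambda>n. \<Sum>j. a j n) \<longlonglongrightarrow> (\<Sum>j. b j)" "summable b"
    using tannerys_theorem[of a b sequentially M, OF lim _ _ trivial_limit_sequentially]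
      always_eventually[of "\<lambda>(j, n). norm (a j n) \<le> M j"] bound
    by (auto intro: summable_norm_cancel)
  have finite_sum: "(\<Sum>j. a j n) = (qpoch q t n)\<^sup>2" for n
  proof -
    have "(\<Sum>j. a j n) = (\<Sum>j\<le>n. a j n)"
      by (rule suminf_finite) (auto simp: a_def)
    also have "\<dots> = (qpoch q t n)\<^sup>2"
      unfolding qpoch_odd_square_finite[OF assms, of n] t_def a_def by simp
    finally show ?thesis .
  qed
  have "(\<Sum>j. b j) = (qpoch_inf q t)\<^sup>2"
    using tannery(1) unfolding finite_sum
    by (rule LIMSEQ_unique) (intro tendsto_power qpoch_tendsto_qpoch_inf t)
  then have "b sums (qpoch_inf q t)\<^sup>2"
    using summable_sums[OF tannery(2)] by simp
  then have "(\<lambda>j. b j * P) sums ((qpoch_inf q t)\<^sup>2 * P)"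
    by (rule sums_mult2)
  then show ?thesis
    using \<open>P > 0\<close> by (simp add: b_def t_def P_def)
qed

theorem gauss_identity:
  fixes q :: real
  assumes "\<bar>q\<bar> < 1"
  shows "(\<lambda>n. theta_coeff n * q ^ n) sums ((qpoch_inf q (q\<^sup>2))\<^sup>2 * qpoch_inf (q\<^sup>2) (q\<^sup>2))"
proof (cases "q = 0")
  case False
  have "strict_mono (\<lambda>j::nat. j\<^sup>2)"
    by (simp add: strict_mono_def power_strict_mono)
  moreover have "theta_coeff n * q ^ n = 0" if "n \<notin> range (\<lambda>j. j\<^sup>2)" for n
    using that by (auto intro: theta_coeff_nonsquare)
  ultimately show ?thesis
    using gauss_identity_squares[OF False assms]
      sums_mono_reindex[of "\<lambda>j. j\<^sup>2" "\<lambda>n. theta_coeff n * q ^ n"]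
    by simp
next
  case True
  have "theta_coeff 0 = 1"
    by (simp add: theta_coeff_def)
  with True show ?thesis
    by simp
qed

section \<open>Power series\<close>

definition cauchy_product :: "(nat \<Rightarrow> 'a::semiring_0) \<Rightarrow> (nat \<Rightarrow> 'a) \<Rightarrow> nat \<Rightarrow> 'a" where
  "cauchy_product a b n = (\<Sum>i\<le>n. a i * b (n - i))"

lemma powser_cauchy_product_sums:
  fixes a b :: "nat \<Rightarrow> 'a::{real_normed_field,banach}"
  assumes "\<And>z. norm z < r \<Longrightarrow> (\<lambda>n. a n * z ^ n) sums A z"
    and "\<And>z. norm z < r \<Longrightarrow> (\<lambda>n. b n * z ^ n) sums B z"
    and "norm x < r"
  shows "(\<lambda>n. cauchy_product a b n * x ^ n) sums (A x * B x)"
proof -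
  \<comment> \<open>Convergence at y gives absolute convergence at x, where norm x < norm y < r.\<close>
  define y :: 'a where "y = of_real ((norm x + r) / 2)"
  have "0 \<le> norm x + r"
    using assms(3) norm_ge_zero[of x] by linarith
  then have "norm y = (norm x + r) / 2"
    unfolding y_def norm_of_real by simp
  then have y: "norm x < norm y" "norm y < r"
    using assms(3) by simp_all
  have "summable (\<lambda>n. norm (a n * x ^ n))" "summable (\<lambda>n. norm (b n * x ^ n))"
    using assms(1,2)[OF y(2)] y(1) by (auto intro: powser_insidea sums_summable)
  from Cauchy_product_sums[OF this]
  have "(\<lambda>n. \<Sum>i\<le>n. (a i * x ^ i) * (b (n - i) * x ^ (n - i))) sums (A x * B x)"
    using assms(1,2)[OF assms(3)] by (simp add: sums_iff)
  moreover have "(\<Sum>i\<le>n. (a i * x ^ i) * (b (n - i) * x ^ (n - i))) = cauchy_product a b n * x ^ n" for n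
    unfolding cauchy_product_def sum_distrib_right
    by (intro sum.cong) (auto simp: power_add[symmetric] mult_ac)
  ultimately show ?thesis
    by simp
qed

lemma powser_coeffs_unique:
  fixes a b :: "nat \<Rightarrow> 'a::{real_normed_field,banach}"
  assumes "0 < r"
    and "\<And>x. norm x < r \<Longrightarrow> (\<lambda>n. a n * x ^ n) sums f x"
    and "\<And>x. norm x < r \<Longrightarrow> (\<lambda>n. b n * x ^ n) sums f x"
  shows "a = b"
proof -
  have diff: "(\<lambda>n. (a n - b n) * x ^ n) sums 0" if "norm x < r" for x
    using sums_diff[OF assms(2,3)[OF that]] by (simp add: left_diff_distrib)
  have "a n - b n = 0" for n
  proof (induction n rule: less_induct)
    case (less n)
    have "(\<lambda>k. (a (k + n) - b (k + n)) * x ^ k) sums 0" if "x \<noteq> 0" "norm x < r" for x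
    proof -
      have "(\<lambda>k. (a (k + n) - b (k + n)) * x ^ (k + n)) sums 0"
        using sums_split_initial_segment[OF diff[OF that(2)], of n] less.IH by simp
      then have "(\<lambda>k. (a (k + n) - b (k + n)) * x ^ (k + n) / x ^ n) sums 0"
        using sums_divide by fastforce
      then show ?thesis
        using that(1) by (simp add: power_add)
    qed
    then have "((\<lambda>x. 0) \<longlongrightarrow> a (0 + n) - b (0 + n)) (at (0 :: 'a))"
      by (rule powser_limit_0_strong[OF assms(1)])
    then show ?case
      by (simp add: tendsto_const_iff)
  qed
  then show ?thesis
    by auto
qed

lemma sums_geometric_multiples:
  fixes t :: real
  assumes "\<bar>t\<bar> < 1" "0 < k"
  shows "(\<lambda>n. (if k dvd n then 1 else 0) * t ^ n) sums (1 / (1 - t ^ k))"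
proof -
  have "\<bar>t ^ k\<bar> < 1"
    using assms by (simp add: power_abs power_less_one_iff)
  then have "(\<lambda>j. (\<lambda>n. (if k dvd n then 1 else 0) * t ^ n) (k * j)) sums (1 / (1 - t ^ k))"
    using geometric_sums[of "t ^ k"] by (simp add: power_mult)
  moreover have "strict_mono (\<lambda>j. k * j)"
    using assms(2) by (simp add: strict_mono_def)
  moreover have "(if k dvd n then 1 else 0) * t ^ n = 0" if "n \<notin> range (\<lambda>j. k * j)" for n
    using that by auto
  ultimately show ?thesis
    using sums_mono_reindex[of "\<lambda>j. k * j" "\<lambda>n. (if k dvd n then 1 else 0) * t ^ n"] by simp
qed

section \<open>Euler's partition generating function\<close>

(* Partitions of n into parts at most m; the summand i counts those whose parts equal to Suc m
   add up to n - i. *)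
fun partitions_upto :: "nat \<Rightarrow> nat \<Rightarrow> nat" where
  "partitions_upto 0 n = (if n = 0 then 1 else 0)"
| "partitions_upto (Suc m) n = (\<Sum>i\<le>n. if Suc m dvd n - i then partitions_upto m i else 0)"

definition partition_number :: "nat \<Rightarrow> nat" where
  "partition_number n = partitions_upto n n"

lemma partitions_upto_Suc_ge: "partitions_upto m n \<le> partitions_upto (Suc m) n"
  using member_le_sum[of n "{..n}" "\<lambda>i. if Suc m dvd n - i then partitions_upto m i else 0"] by simp

lemma partitions_upto_mono: "m \<le> m' \<Longrightarrow> partitions_upto m n \<le> partitions_upto m' n"
  using lift_Suc_mono_le[of "\<lambda>m. partitions_upto m n"] partitions_upto_Suc_ge by blast

lemma partitions_upto_stable:
  assumes "n \<le> m"
  shows "partitions_upto (Suc m) n = partitions_upto m n"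
proof -
  have "\<not> Suc m dvd n - i" if "i < n" for i
    using that assms by (auto dest: dvd_imp_le)
  then have "partitions_upto (Suc m) n = (\<Sum>i<n. 0) + partitions_upto m n"
    unfolding partitions_upto.simps lessThan_Suc_atMost[symmetric] sum.lessThan_Suc
    by (intro arg_cong2[where f = "(+)"] sum.cong) auto
  then show ?thesis
    by simp
qed

lemma partitions_upto_eq_partition_number: "n \<le> m \<Longrightarrow> partitions_upto m n = partition_number n"
  by (induction m rule: dec_induct)
    (simp_all add: partition_number_def partitions_upto_stable del: partitions_upto.simps)

lemma partitions_upto_le_partition_number: "partitions_upto m n \<le> partition_number n"
  using partitions_upto_mono[of m "max m n" n] partitions_upto_eq_partition_number[of n "max m n"]
  by simp

lemma partition_number_pos: "0 < partition_number n"
proof -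
  have "partitions_upto (Suc 0) n = 1"
    by (simp add: sum.atMost_shift)
  then show ?thesis
    using partitions_upto_eq_partition_number[of n "max 1 n"] partitions_upto_mono[of 1 "max 1 n" n]
    by simp
qed

lemma partitions_upto_sums:
  assumes "\<bar>t\<bar> < 1"
  shows "(\<lambda>n. real (partitions_upto m n) * t ^ n) sums (1 / qpoch t t m)"
  using assms
proof (induction m arbitrary: t)
  case 0
  have "(\<lambda>n. real (partitions_upto 0 n) * t ^ n) = (\<lambda>n. if n = 0 then 1 else 0)"
    by auto
  then show ?case
    using sums_single[of 0 "\<lambda>_. 1 :: real"] by simp
next
  case (Suc m)
  have "real (partitions_upto (Suc m) n)
      = cauchy_product (\<lambda>i. real (partitions_upto m i)) (\<lambda>j. if Suc m dvd j then 1 else 0) n" for n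
    by (auto simp: cauchy_product_def of_nat_sum intro!: sum.cong)
  moreover have "(\<lambda>n. cauchy_product (\<lambda>i. real (partitions_upto m i)) (\<lambda>j. if Suc m dvd j then 1 else 0) n * t ^ n)
      sums (1 / qpoch t t m * (1 / (1 - t ^ Suc m)))"
    using Suc.prems
    by (intro powser_cauchy_product_sums[where r = 1 and A = "\<lambda>z. 1 / qpoch z z m"
          and B = "\<lambda>z. 1 / (1 - z ^ Suc m)"] Suc.IH sums_geometric_multiples) auto
  ultimately show ?case
    by (simp add: qpoch_Suc)
qed

lemma summable_partition_number:
  fixes t :: real
  assumes "0 \<le> t" "t < 1"
  shows "summable (\<lambda>n. real (partition_number n) * t ^ n)"
proof (rule bounded_imp_summable)
  show "0 \<le> real (partition_number n) * t ^ n" for n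
    using assms by simp
  have "\<bar>t\<bar> < 1"
    using assms by simp
  fix N
  have "(\<Sum>n\<le>N. real (partition_number n) * t ^ n) = (\<Sum>n\<le>N. real (partitions_upto N n) * t ^ n)"
    by (simp add: partitions_upto_eq_partition_number)
  also have "\<dots> \<le> (\<Sum>n. real (partitions_upto N n) * t ^ n)"
    using partitions_upto_sums[OF \<open>\<bar>t\<bar> < 1\<close>] assms by (intro sum_le_suminf) (auto simp: sums_iff)
  also have "\<dots> = 1 / qpoch t t N"
    using partitions_upto_sums[OF \<open>\<bar>t\<bar> < 1\<close>] by (simp add: sums_iff)
  also have "\<dots> \<le> 1 / qpoch_inf t t"
    using qpoch_bounds[OF assms assms] qpoch_inf_pos[OF \<open>\<bar>t\<bar> < 1\<close> \<open>\<bar>t\<bar> < 1\<close>]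
    by (intro divide_left_mono mult_pos_pos) (auto intro: order_less_le_trans)
  finally show "(\<Sum>n\<le>N. real (partition_number n) * t ^ n) \<le> 1 / qpoch_inf t t" .
qed

theorem euler_partition_sums:
  fixes t :: real
  assumes "\<bar>t\<bar> < 1"
  shows "(\<lambda>n. real (partition_number n) * t ^ n) sums (1 / qpoch_inf t t)"
proof -
  define a where "a n m = real (partitions_upto m n) * t ^ n" for n m
  define M where "M n = real (partition_number n) * \<bar>t\<bar> ^ n" for n
  have lim: "(\<lambda>m. a n m) \<longlonglongrightarrow> real (partition_number n) * t ^ n" for n
  proof -
    have "\<forall>\<^sub>F m in sequentially. real (partition_number n) * t ^ n = a n m"
      using eventually_ge_at_top[of n] by eventually_elim (simp add: a_def partitions_upto_eq_partition_number)
    then show ?thesis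
      by (rule Lim_transform_eventually[OF tendsto_const])
  qed
  have "norm (a n m) \<le> M n" for n m
    using partitions_upto_le_partition_number[of m n]
    by (simp add: a_def M_def abs_mult power_abs mult_right_mono)
  moreover have "summable M"
    unfolding M_def using assms by (intro summable_partition_number) simp_all
  ultimately have tannery: "(\<lambda>m. \<Sum>n. a n m) \<longlonglongrightarrow> (\<Sum>n. real (partition_number n) * t ^ n)"
      "summable (\<lambda>n. real (partition_number n) * t ^ n)"
    using tannerys_theorem[of a _ sequentially M, OF lim _ _ trivial_limit_sequentially]
      always_eventually[of "\<lambda>(n, m). norm (a n m) \<le> M n"]
    by (auto intro: summable_norm_cancel)
  have "(\<lambda>m. \<Sum>n. a n m) = (\<lambda>m. 1 / qpoch t t m)"
    using partitions_upto_sums[OF assms] by (simp add: a_def sums_iff)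
  moreover have "(\<lambda>m. 1 / qpoch t t m) \<longlonglongrightarrow> 1 / qpoch_inf t t"
    using qpoch_inf_pos[OF assms assms] by (intro tendsto_intros qpoch_tendsto_qpoch_inf assms) simp
  ultimately have "(\<Sum>n. real (partition_number n) * t ^ n) = 1 / qpoch_inf t t"
    using tannery(1) LIMSEQ_unique by simp
  then show ?thesis
    using summable_sums[OF tannery(2)] by simp
qed

section \<open>The power series of F\<close>

definition theta_square_coeff :: "nat \<Rightarrow> real" where
  "theta_square_coeff = cauchy_product theta_coeff theta_coeff"

definition partition_coeff_4 :: "nat \<Rightarrow> real" where
  "partition_coeff_4 n = (if 4 dvd n then real (partition_number (n div 4)) else 0)"

lemma partition_coeff_4_sums:
  fixes q :: real
  assumes "\<bar>q\<bar> < 1"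
  shows "(\<lambda>n. partition_coeff_4 n * q ^ n) sums (1 / qpoch_inf (q ^ 4) (q ^ 4))"
proof -
  have "\<bar>q ^ 4\<bar> < 1"
    using assms power_strict_mono[of "\<bar>q\<bar>" 1 4] by (simp add: power_abs)
  then have "(\<lambda>j. (\<lambda>n. partition_coeff_4 n * q ^ n) (4 * j)) sums (1 / qpoch_inf (q ^ 4) (q ^ 4))"
    using euler_partition_sums by (simp add: partition_coeff_4_def power_mult)
  moreover have "strict_mono (\<lambda>j::nat. 4 * j)"
    by (simp add: strict_mono_def)
  moreover have "partition_coeff_4 n * q ^ n = 0" if "n \<notin> range (\<lambda>j. 4 * j)" for n
    using that by (auto simp: partition_coeff_4_def)
  ultimately show ?thesis
    using sums_mono_reindex[of "\<lambda>j. 4 * j" "\<lambda>n. partition_coeff_4 n * q ^ n"] by simp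
qed

lemma F_eq_theta_square:
  fixes q :: real
  assumes "\<bar>q\<bar> < 1"
  shows "F q = ((qpoch_inf q (q\<^sup>2))\<^sup>2 * qpoch_inf (q\<^sup>2) (q\<^sup>2))\<^sup>2 / qpoch_inf (q ^ 4) (q ^ 4)"
proof -
  have "\<bar>q\<^sup>2\<bar> < 1"
    using assms by (simp add: abs_square_less_1)
  then have "qpoch_inf (q\<^sup>2) (q\<^sup>2) \<noteq> 0"
    using qpoch_inf_pos by (metis less_irrefl)
  then show ?thesis
    unfolding F_def qpoch_inf_double[OF assms] power4_eq_xxxx power2_eq_square by (simp add: field_simps)
qed

definition F_coeff :: "nat \<Rightarrow> real" where
  "F_coeff = cauchy_product theta_square_coeff partition_coeff_4"

lemma F_coeff_sums:
  fixes q :: real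
  assumes "\<bar>q\<bar> < 1"
  shows "(\<lambda>n. F_coeff n * q ^ n) sums F q"
proof -
  have "(\<lambda>n. theta_square_coeff n * z ^ n) sums ((qpoch_inf z (z\<^sup>2))\<^sup>2 * qpoch_inf (z\<^sup>2) (z\<^sup>2))\<^sup>2"
    if "norm z < 1" for z :: real
    unfolding theta_square_coeff_def power2_eq_square[of "_ * _"]
    using that by (intro powser_cauchy_product_sums[where r = 1] gauss_identity) auto
  then show ?thesis
    unfolding F_coeff_def F_eq_theta_square[OF assms] divide_inverse
    using assms partition_coeff_4_sums
    by (intro powser_cauchy_product_sums[where r = 1]) (auto simp: divide_inverse)
qed

section \<open>Signs of the coefficients\<close>

lemma cauchy_product_alternating:
  fixes a b :: "nat \<Rightarrow> 'a::comm_ring_1"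
  shows "(- 1) ^ n * cauchy_product a b n = cauchy_product (\<lambda>i. (- 1) ^ i * a i) (\<lambda>i. (- 1) ^ i * b i) n"
  unfolding cauchy_product_def sum_distrib_left
  by (intro sum.cong) (auto simp: power_add[symmetric] mult_ac)

lemma cauchy_product_nonneg:
  fixes a b :: "nat \<Rightarrow> 'a::linordered_idom"
  shows "(\<And>i. 0 \<le> a i) \<Longrightarrow> (\<And>i. 0 \<le> b i) \<Longrightarrow> 0 \<le> cauchy_product a b n"
  unfolding cauchy_product_def by (intro sum_nonneg mult_nonneg_nonneg)

lemma cauchy_product_ge_term:
  fixes a b :: "nat \<Rightarrow> 'a::linordered_idom"
  assumes "\<And>i. 0 \<le> a i" "\<And>i. 0 \<le> b i" "i \<le> n"
  shows "a i * b (n - i) \<le> cauchy_product a b n"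
  unfolding cauchy_product_def
  using assms by (intro member_le_sum[of i "{..n}" "\<lambda>i. a i * b (n - i)"]) auto

lemma theta_coeff_alternating_nonneg: "0 \<le> (- 1) ^ n * theta_coeff n"
  by (simp add: theta_coeff_def)

lemma theta_coeff_small: "theta_coeff 0 = 1" "theta_coeff 1 = - 2" "theta_coeff 2 = 0"
proof -
  show "theta_coeff 0 = 1" "theta_coeff 1 = - 2"
    using theta_coeff_square[of 0] theta_coeff_square[of 1] by simp_all
  have "2 \<noteq> j\<^sup>2" for j :: nat
  proof (cases "j \<le> 1")
    case False
    then have "2\<^sup>2 \<le> j\<^sup>2"
      by (intro power_mono) simp_all
    then show ?thesis
      by auto
  qed (auto simp: le_Suc_eq)
  then show "theta_coeff 2 = 0"
    by (rule theta_coeff_nonsquare)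
qed

lemma sum_two_squares_mod_4: "((a::nat)\<^sup>2 + b\<^sup>2) mod 4 \<noteq> 3"
proof -
  have square_mod_4: "x\<^sup>2 mod 4 = 0 \<or> x\<^sup>2 mod 4 = 1" for x :: nat
  proof -
    have "x mod 4 = 0 \<or> x mod 4 = 1 \<or> x mod 4 = 2 \<or> x mod 4 = 3"
      by presburger
    moreover have "x\<^sup>2 mod 4 = (x mod 4)\<^sup>2 mod 4"
      by (simp add: power_mod)
    ultimately show ?thesis
      by (auto simp: power2_eq_square)
  qed
  have "(a\<^sup>2 + b\<^sup>2) mod 4 = (a\<^sup>2 mod 4 + b\<^sup>2 mod 4) mod 4"
    by (simp add: mod_add_eq)
  then show ?thesis
    using square_mod_4[of a] square_mod_4[of b] by auto
qed

lemma theta_square_coeff_alternating_nonneg: "0 \<le> (- 1) ^ n * theta_square_coeff n"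
  unfolding theta_square_coeff_def cauchy_product_alternating
  by (intro cauchy_product_nonneg theta_coeff_alternating_nonneg)

lemma theta_square_coeff_small: "theta_square_coeff 0 = 1" "theta_square_coeff 1 = - 4" "theta_square_coeff 2 = 4"
proof -
  have "theta_coeff (Suc 0) = - 2" "theta_coeff (Suc (Suc 0)) = 0"
    using theta_coeff_small by (simp_all add: numeral_2_eq_2)
  then show "theta_square_coeff 0 = 1" "theta_square_coeff 1 = - 4" "theta_square_coeff 2 = 4"
    by (simp_all add: theta_square_coeff_def cauchy_product_def numeral_2_eq_2 theta_coeff_small)
qed

lemma theta_square_coeff_3_mod_4:
  assumes "n mod 4 = 3"
  shows "theta_square_coeff n = 0"
  unfolding theta_square_coeff_def cauchy_product_def
proof (intro sum.neutral ballI)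
  fix i assume "i \<in> {..n}"
  have "theta_coeff i = 0 \<or> theta_coeff (n - i) = 0"
  proof (rule ccontr)
    assume "\<not> ?thesis"
    then obtain a b where "i = a\<^sup>2" "n - i = b\<^sup>2"
      using theta_coeff_nonsquare by metis
    with \<open>i \<in> {..n}\<close> have "n = a\<^sup>2 + b\<^sup>2"
      by simp
    then show False
      using assms sum_two_squares_mod_4 by metis
  qed
  then show "theta_coeff i * theta_coeff (n - i) = 0"
    by auto
qed

lemma F_coeff_alternating:
  "(- 1) ^ n * F_coeff n = cauchy_product (\<lambda>i. (- 1) ^ i * theta_square_coeff i) partition_coeff_4 n"
  unfolding F_coeff_def cauchy_product_def sum_distrib_left
proof (intro sum.cong refl)
  fix i assume "i \<in> {..n}"
  have "(- 1 :: real) ^ n = (- 1) ^ i" if "4 dvd n - i"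
  proof -
    from that obtain k where "n - i = 4 * k"
      by (elim dvdE)
    with \<open>i \<in> {..n}\<close> have "n = i + 2 * (2 * k)"
      by simp
    then show ?thesis
      by (simp add: power_add power_mult)
  qed
  then show "(- 1) ^ n * (theta_square_coeff i * partition_coeff_4 (n - i))
      = (- 1) ^ i * theta_square_coeff i * partition_coeff_4 (n - i)"
    by (auto simp: partition_coeff_4_def)
qed

lemma F_coeff_alternating_ge_1:
  assumes "n mod 4 \<le> 2"
  shows "1 \<le> (- 1) ^ n * F_coeff n"
proof -
  define r where "r = n mod 4"
  have "r = 0 \<or> r = 1 \<or> r = 2"
    using assms by (auto simp: r_def)
  moreover have "theta_square_coeff (Suc 0) = - 4"
    using theta_square_coeff_small(2) by simp
  ultimately have "1 \<le> (- 1) ^ r * theta_square_coeff r"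
    using theta_square_coeff_small by auto
  moreover have "1 \<le> partition_coeff_4 (n - r)"
    using partition_number_pos[of "(n - r) div 4"]
    by (simp add: partition_coeff_4_def r_def minus_mod_eq_mult_div)
  ultimately have "1 \<le> (- 1) ^ r * theta_square_coeff r * partition_coeff_4 (n - r)"
    using mult_mono[of 1 "(- 1) ^ r * theta_square_coeff r" 1 "partition_coeff_4 (n - r)"] by simp
  also have "\<dots> \<le> (- 1) ^ n * F_coeff n"
    unfolding F_coeff_alternating
    by (intro cauchy_product_ge_term theta_square_coeff_alternating_nonneg)
      (auto simp: partition_coeff_4_def r_def)
  finally show ?thesis .
qed

lemma F_coeff_3_mod_4: "n mod 4 = 3 \<Longrightarrow> F_coeff n = 0"
  unfolding F_coeff_def cauchy_product_def
proof (intro sum.neutral ballI)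
  fix i assume "n mod 4 = 3" "i \<in> {..n}"
  then have "i mod 4 = 3" if "4 dvd n - i"
    using that mod_eq_dvd_iff_nat[of i n 4] by simp
  then show "theta_square_coeff i * partition_coeff_4 (n - i) = 0"
    by (auto simp: partition_coeff_4_def theta_square_coeff_3_mod_4)
qed

lemma even_iff_mod_4: "even n \<longleftrightarrow> even (n mod 4 :: nat)"
  by (metis dvd_mod_iff even_numeral)

lemma F_coeff_pos:
  assumes "n mod 4 = 0 \<or> n mod 4 = 2"
  shows "0 < F_coeff n"
proof -
  have "even n"
    using assms even_iff_mod_4[of n] by auto
  then show ?thesis
    using F_coeff_alternating_ge_1[of n] assms by auto
qed

lemma F_coeff_neg:
  assumes "n mod 4 = 1"
  shows "F_coeff n < 0"
proof -
  have "odd n"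
    using assms even_iff_mod_4[of n] by auto
  then show ?thesis
    using F_coeff_alternating_ge_1[of n] assms by auto
qed

theorem theorem1p3:
  fixes a :: "nat \<Rightarrow> real"
  assumes expansion: "\<forall>q::real. \<bar>q\<bar> < 1 \<longrightarrow> (\<lambda>n. a n * q ^ n) sums F q"
  shows "\<forall>n. (n mod 4 = 0 \<or> n mod 4 = 2 \<longrightarrow> a n > 0)
           \<and> (n mod 4 = 1 \<longrightarrow> a n < 0)
           \<and> (n mod 4 = 3 \<longrightarrow> a n = 0)"
proof -
  have "a = F_coeff"
    using expansion F_coeff_sums by (intro powser_coeffs_unique[where r = 1]) auto
  then show ?thesis
    using F_coeff_pos F_coeff_neg F_coeff_3_mod_4 by simp
qed

end
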